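(* Let $\Bbbk$ be a field, $m\in\mathbb N$, $K=\Bbbk[\sigma]/(\sigma^m)\subset L=\Bbbk[\varepsilon]/(\varepsilon^{2m})$ via $\sigma=\varepsilon^2$, $K_j=K/(\sigma^j)$ and $L_j=L/(\varepsilon^{2j})$. Let $0\le j\le m$, $V=K\oplus K_j$, and let $\tilde\theta:V\to L$ be an injective $K$-linear map such that its adjoint $\theta:L\otimes_K V\cong L\oplus L_j\to L$ is surjective; write $\theta=(a\mid b)$ with $a,b\in L$, $\varepsilon^{2j}b=0$ (for $j=0$ the second entry is absent). Then there exists an element $\gamma=\alpha_0+\alpha_1\varepsilon^2+\dots+\alpha_{m-j-1}\varepsilon^{2(m-j-1)}\in L$ ($\alpha_i\in\Bbbk$) such that $\theta$ is equivalent to $\vartheta_\gamma:=(1+\varepsilon\gamma\mid\varepsilon^{2(m-j)+1})$. Moreover, $\vartheta_\gamma$ and $\vartheta_{\gamma'}$ are equivalent if and only if $\gamma=\gamma'$.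
   Context: Two $L$-linear maps $\theta,\theta':L\otimes_K V\to L$ are called equivalent if there is $\varphi\in\operatorname{Aut}_K(V)$ with $\theta'=\theta\circ(1\otimes\varphi)$. *)

theory Defs
  imports "HOL-Computational_Algebra.Polynomial"
begin

text \<open>Elements of L = k[eps]/(eps^(2m)) are represented by their
  unique reduced representatives: polynomials in eps with all coefficients of degree
  >= 2m equal to zero.  K = k[sigma]/(sigma^m) is the subring of even
  representatives (sigma = eps^2); K_j = K/(sigma^j) and L_j = L/(eps^(2j)) are
  represented by representatives of degree < 2j.\<close>

definition trunc :: "nat \<Rightarrow> 'k::field poly \<Rightarrow> 'k poly" where
  "trunc n p = (\<Sum>i<n. monom (coeff p i) i)"

definition eps :: "'k::field poly" where
  "eps = monom 1 1"

definition Lset :: "nat \<Rightarrow> 'k::field poly set" where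
  "Lset n = {p. \<forall>i\<ge>n. coeff p i = 0}"

definition Kset :: "nat \<Rightarrow> 'k::field poly set" where
  "Kset n = {p \<in> Lset n. \<forall>i. odd i \<longrightarrow> coeff p i = 0}"

definition Vset :: "nat \<Rightarrow> nat \<Rightarrow> ('k::field poly \<times> 'k poly) set" where
  "Vset m j = Kset (2*m) \<times> Kset (2*j)"

definition Vsmult :: "nat \<Rightarrow> nat \<Rightarrow> 'k::field poly \<Rightarrow> 'k poly \<times> 'k poly \<Rightarrow> 'k poly \<times> 'k poly" where
  "Vsmult m j s v = (trunc (2*m) (s * fst v), trunc (2*j) (s * snd v))"

definition AutV :: "nat \<Rightarrow> nat \<Rightarrow> ('k::field poly \<times> 'k poly \<Rightarrow> 'k poly \<times> 'k poly) set" where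
  "AutV m j = {\<phi>. bij_betw \<phi> (Vset m j) (Vset m j)
     \<and> (\<forall>u\<in>Vset m j. \<forall>v\<in>Vset m j. \<phi> (fst u + fst v, snd u + snd v) = (fst (\<phi> u) + fst (\<phi> v), snd (\<phi> u) + snd (\<phi> v)))
     \<and> (\<forall>s\<in>Kset (2*m). \<forall>v\<in>Vset m j. \<phi> (Vsmult m j s v) = Vsmult m j s (\<phi> v))}"

text \<open>The K-linear map tilde-theta = (a | b) : V \<rightarrow> L\<close>
definition thetaK :: "nat \<Rightarrow> 'k::field poly \<times> 'k poly \<Rightarrow> 'k poly \<times> 'k poly \<Rightarrow> 'k poly" where
  "thetaK m ab v = trunc (2*m) (fst ab * fst v + snd ab * snd v)"

text \<open>Its adjoint theta = (a | b) : L \<otimes>_K V \<cong> L \<oplus> L_j \<rightarrow> L\<close>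
definition thetaL :: "nat \<Rightarrow> 'k::field poly \<times> 'k poly \<Rightarrow> 'k poly \<times> 'k poly \<Rightarrow> 'k poly" where
  "thetaL m ab z = trunc (2*m) (fst ab * fst z + snd ab * snd z)"

text \<open>1 \<otimes> phi on L \<otimes>_K V \<cong> L \<oplus> L_j, determined by phi(1,0) = (p,r) and phi(0,1) = (q,s)\<close>
definition tensor_id :: "nat \<Rightarrow> nat \<Rightarrow> ('k::field poly \<times> 'k poly \<Rightarrow> 'k poly \<times> 'k poly)
    \<Rightarrow> 'k poly \<times> 'k poly \<Rightarrow> 'k poly \<times> 'k poly" where
  "tensor_id m j \<phi> z =
    (let e1 = \<phi> (trunc (2*m) 1, 0); e2 = \<phi> (0, trunc (2*j) 1) in
      (trunc (2*m) (fst z * fst e1 + snd z * fst e2),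
       trunc (2*j) (fst z * snd e1 + snd z * snd e2)))"

definition equivalent :: "nat \<Rightarrow> nat \<Rightarrow> 'k::field poly \<times> 'k poly \<Rightarrow> 'k poly \<times> 'k poly \<Rightarrow> bool" where
  "equivalent m j \<theta> \<theta>' \<longleftrightarrow>
     (\<exists>\<phi>\<in>AutV m j. \<forall>z\<in>Lset (2*m) \<times> Lset (2*j).
        thetaL m \<theta>' z = thetaL m \<theta> (tensor_id m j \<phi> z))"

definition Gam :: "nat \<Rightarrow> nat \<Rightarrow> 'k::field poly set" where
  "Gam m j = Kset (2*(m-j))"

definition vartheta :: "nat \<Rightarrow> nat \<Rightarrow> 'k::field poly \<Rightarrow> 'k poly \<times> 'k poly" where
  "vartheta m j \<gamma> = (trunc (2*m) (1 + eps * \<gamma>), trunc (2*m) (eps ^ (2*(m-j)+1)))"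

end

theory Submission
  imports Defs "HOL-Number_Theory.Cong"
begin

text \<open>
  Write \<theta> = (a | b) and split a = \<alpha> + \<epsilon>\<beta>, b = \<epsilon>^(2(m-j)) (\<mu> + \<epsilon>\<nu>) into even and odd
  parts; the factor \<epsilon>^(2(m-j)) of b comes from \<epsilon>^(2j) b = 0. Surjectivity of \<theta> makes \<alpha> a unit,
  so \<gamma> \<equiv> \<beta>/\<alpha> modulo \<epsilon>^(2(m-j)) gives a = (1 + \<epsilon>\<gamma>) \<alpha> + \<epsilon>^(2(m-j)+1) r and
  b = (1 + \<epsilon>\<gamma>) q + \<epsilon>^(2(m-j)+1) s with \<alpha>, q, r, s \<in> K. Thus \<theta> = \<vartheta>_\<gamma> A for a 2\<times>2 matrix A
  over K, whose determinant is \<alpha>\<nu> - \<beta>\<mu> if j > 0 (and \<alpha> modulo \<sigma> if j = 0). Injectivity of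
  \<theta> on the socle \<sigma>^(m-1) K \<oplus> \<sigma>^(j-1) K_j makes this determinant a unit, so A is an
  automorphism of V.
  For uniqueness, evaluate \<vartheta>_\<gamma>' = \<vartheta>_\<gamma> \<circ> (1 \<otimes> \<phi>) at (1, 0): with \<phi>(1, 0) = (P, R) this reads
  1 + \<epsilon>\<gamma>' = (1 + \<epsilon>\<gamma>) P + \<epsilon>^(2(m-j)+1) R, whose even part forces P \<equiv> 1 and whose odd part
  then gives \<gamma>' \<equiv> \<gamma> modulo \<epsilon>^(2(m-j)).
\<close>

section \<open>Truncation and congruences modulo powers of the variable\<close>

lemma coeff_trunc: "coeff (trunc n p) i = (if i < n then coeff p i else 0)"
  unfolding trunc_def by (simp add: coeff_sum coeff_monom)

lemma trunc_in_Lset: "trunc n p \<in> Lset n"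
  by (simp add: Lset_def coeff_trunc)

lemma trunc_eq_self: "p \<in> Lset n \<Longrightarrow> trunc n p = p"
  by (simp add: Lset_def coeff_trunc poly_eq_iff)

lemma trunc_0: "trunc 0 p = 0"
  by (simp add: trunc_def)

lemma trunc_add: "trunc n (p + q) = trunc n p + trunc n q"
  by (simp add: poly_eq_iff coeff_trunc)

lemma trunc_one: "n \<ge> 1 \<Longrightarrow> trunc n 1 = 1"
  by (simp add: poly_eq_iff coeff_trunc coeff_1)

lemma cong_monom_1_iff:
  "[p = q] (mod monom 1 n) \<longleftrightarrow> (\<forall>i<n. coeff p i = coeff (q::'k::field poly) i)"
  by (simp add: cong_iff_dvd_diff monom_1_dvd_iff')

lemma trunc_eq_0_iff: "trunc n p = 0 \<longleftrightarrow> monom 1 n dvd (p::'k::field poly)"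
  by (auto simp: poly_eq_iff coeff_trunc monom_1_dvd_iff')

lemma cong_trunc: "[trunc n p = p] (mod monom 1 n)"
  by (simp add: cong_monom_1_iff coeff_trunc)

lemma trunc_eq_iff_cong: "trunc n p = trunc n q \<longleftrightarrow> [p = q] (mod monom 1 n)"
  by (auto simp add: cong_monom_1_iff coeff_trunc poly_eq_iff)

lemma Lset_cong_imp_eq: "p \<in> Lset n \<Longrightarrow> q \<in> Lset n \<Longrightarrow> [p = q] (mod monom 1 n) \<Longrightarrow> p = q"
  by (metis trunc_eq_iff_cong trunc_eq_self)

lemma monom_1_dvd_monom_1: "a \<le> b \<Longrightarrow> monom 1 a dvd (monom 1 b :: 'k::field poly)"
  by (simp add: monom_1_dvd_iff' coeff_monom)

lemma monom_1_mult_poly_shift: "monom 1 k dvd u \<Longrightarrow> monom 1 k * poly_shift k u = u"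
  by (auto simp add: monom_1_dvd_iff' poly_eq_iff coeff_monom_mult coeff_poly_shift)

lemma cong_monom_1_mono:
  fixes u v :: "'k::field poly"
  shows "a \<le> b \<Longrightarrow> [u = v] (mod monom 1 b) \<Longrightarrow> [u = v] (mod monom 1 a)"
  by (metis cong_dvd_modulus monom_1_dvd_monom_1)

lemma cong_mult_absorb:
  fixes u v x :: "'a::unique_euclidean_ring"
  assumes "M dvd J * x" "[u = v] (mod J)"
  shows "[u * x = v * x] (mod M)"
proof -
  from assms(2) obtain h where h: "u - v = J * h"
    by (auto simp: cong_iff_dvd_diff elim: dvdE)
  have "u * x - v * x = (u - v) * x"
    by (simp add: left_diff_distrib)
  also have "\<dots> = (J * x) * h"
    by (simp add: h ac_simps)
  finally show ?thesis
    using assms(1) by (simp add: cong_iff_dvd_diff)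
qed

section \<open>Even polynomials\<close>

definition even_poly :: "'k::field poly \<Rightarrow> bool" where
  "even_poly p \<longleftrightarrow> (\<forall>i. odd i \<longrightarrow> coeff p i = 0)"

lemma Kset_iff: "p \<in> Kset n \<longleftrightarrow> p \<in> Lset n \<and> even_poly p"
  by (simp add: Kset_def even_poly_def)

lemma Vset_iff:
  "v \<in> Vset m j \<longleftrightarrow>
     fst v \<in> Lset (2*m) \<and> even_poly (fst v) \<and> snd v \<in> Lset (2*j) \<and> even_poly (snd v)"
  by (cases v) (auto simp: Vset_def Kset_iff)

lemma even_poly_mult: "even_poly p \<Longrightarrow> even_poly q \<Longrightarrow> even_poly (p * q)"
  unfolding even_poly_def coeff_mult
proof (intro allI impI sum.neutral ballI)
  fix k i :: nat
  assume p: "\<forall>i. odd i \<longrightarrow> coeff p i = 0" and q: "\<forall>i. odd i \<longrightarrow> coeff q i = 0"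
    and "odd k" "i \<in> {..k}"
  then have "odd i \<or> odd (k - i)" by auto
  with p q show "coeff p i * coeff q (k - i) = 0" by (metis mult_eq_0_iff)
qed

lemma even_poly_add: "even_poly p \<Longrightarrow> even_poly q \<Longrightarrow> even_poly (p + q)"
  by (simp add: even_poly_def)

lemma even_poly_diff: "even_poly p \<Longrightarrow> even_poly q \<Longrightarrow> even_poly (p - q)"
  by (simp add: even_poly_def)

lemma even_poly_minus: "even_poly p \<Longrightarrow> even_poly (- p)"
  by (simp add: even_poly_def)

lemma even_poly_0 [simp]: "even_poly 0"
  by (simp add: even_poly_def)

lemma even_poly_monom: "even k \<Longrightarrow> even_poly (monom c k)"
  by (auto simp add: even_poly_def coeff_monom)

lemma even_poly_const: "even_poly [:c:]"
  by (metis even_poly_monom monom_0 even_zero)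

lemma even_poly_1 [simp]: "even_poly 1"
  using even_poly_const[of 1] by (simp add: one_pCons)

lemma even_poly_trunc: "even_poly p \<Longrightarrow> even_poly (trunc n p)"
  by (simp add: even_poly_def coeff_trunc)

lemma even_poly_poly_shift: "even_poly u \<Longrightarrow> even k \<Longrightarrow> even_poly (poly_shift k u)"
  by (simp add: even_poly_def coeff_poly_shift)

definition even_part :: "'k::field poly \<Rightarrow> 'k poly" where
  "even_part p = Abs_poly (\<lambda>i. if even i then coeff p i else 0)"

definition odd_part :: "'k::field poly \<Rightarrow> 'k poly" where
  "odd_part p = even_part (poly_shift 1 p)"

lemma coeff_even_part: "coeff (even_part p) i = (if even i then coeff p i else 0)"
proof -
  have "\<forall>\<^sub>\<infinity>k. (if even k then coeff p k else 0) = 0"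
    using MOST_coeff_eq_0[of p] by (rule MOST_mono) simp
  then show ?thesis
    by (simp add: even_part_def poly.Abs_poly_inverse)
qed

lemma even_poly_even_part: "even_poly (even_part p)"
  by (simp add: even_poly_def coeff_even_part)

lemma even_poly_odd_part: "even_poly (odd_part p)"
  by (simp add: odd_part_def even_poly_even_part)

lemma even_odd_decomp: "p = even_part p + monom 1 1 * odd_part p"
  by (auto simp add: poly_eq_iff coeff_even_part odd_part_def coeff_monom_mult coeff_poly_shift)

lemma cong_even_odd_iff:
  fixes u v u' v' :: "'k::field poly"
  assumes "even_poly u" "even_poly v" "even_poly u'" "even_poly v'"
  shows "[u + monom 1 1 * v = u' + monom 1 1 * v'] (mod monom 1 (2*k))
    \<longleftrightarrow> [u = u'] (mod monom 1 (2*k)) \<and> [v = v'] (mod monom 1 (2*k))"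
proof -
  have coeff_split: "coeff (x + monom 1 1 * y) i = (if even i then coeff x i else coeff y (i - 1))"
    if "even_poly x" "even_poly y" for x y :: "'k poly" and i
    using that by (cases i) (auto simp: even_poly_def coeff_monom_mult)
  show ?thesis
  proof
    assume "[u + monom 1 1 * v = u' + monom 1 1 * v'] (mod monom 1 (2*k))"
    then have C: "coeff (u + monom 1 1 * v) i = coeff (u' + monom 1 1 * v') i" if "i < 2*k" for i
      using that by (simp add: cong_monom_1_iff)
    have "coeff u i = coeff u' i" if "i < 2*k" for i
      using C[OF that] assms coeff_split by (cases "even i") (auto simp: even_poly_def)
    moreover have "coeff v i = coeff v' i" if "i < 2*k" for i
    proof (cases "even i")
      case True
      then have "Suc i < 2*k" using that by presburger
      then show ?thesis using C[of "Suc i"] assms True coeff_split by auto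
    next
      case False
      then show ?thesis using assms by (simp add: even_poly_def)
    qed
    ultimately show "[u = u'] (mod monom 1 (2*k)) \<and> [v = v'] (mod monom 1 (2*k))"
      by (simp add: cong_monom_1_iff)
  qed (intro cong_add cong_scalar_left; simp)
qed

lemma even_poly_inverse_mod:
  fixes f :: "'k::field poly"
  assumes "even_poly f" "coeff f 0 \<noteq> 0"
  shows "\<exists>g. even_poly g \<and> [f * g = 1] (mod monom 1 n)"
proof (induction n)
  case 0
  show ?case by (intro exI[of _ 0]) simp
next
  case (Suc n)
  show ?case
  proof (cases n)
    case 0
    have "[f * [:inverse (coeff f 0):] = 1] (mod monom 1 1)"
      using assms by (simp add: cong_monom_1_iff coeff_mult_0)
    then show ?thesis using 0 even_poly_const by (metis One_nat_def)
  next
    case (Suc n')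
    from Suc.IH obtain g where g: "even_poly g" "[f * g = 1] (mod monom 1 n)" by blast
    then obtain h where h: "f * g - 1 = monom 1 n * h"
      by (auto simp: cong_iff_dvd_diff elim: dvdE)
    \<comment> \<open>Newton step \<open>g \<mapsto> g (2 - f g)\<close> squares the error \<open>f g - 1\<close>.\<close>
    have "f * (g * (2 - f * g)) - 1 = - ((f * g - 1) * (f * g - 1))" by algebra
    also have "\<dots> = monom 1 (n + n) * (- h * h)"
    proof -
      have "monom 1 (n + n) = monom 1 n * (monom 1 n :: 'k poly)" by (simp add: mult_monom)
      then show ?thesis by (simp only: h) (simp add: algebra_simps)
    qed
    finally have "monom 1 (n + n) dvd f * (g * (2 - f * g)) - 1"
      by simp
    moreover have "monom 1 (Suc n) dvd (monom 1 (n + n) :: 'k poly)"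
      using Suc by (intro monom_1_dvd_monom_1) simp
    ultimately have "monom 1 (Suc n) dvd f * (g * (2 - f * g)) - 1"
      by (rule dvd_trans[rotated])
    moreover have "even_poly (g * (2 - f * g))"
      using g assms even_poly_add[OF even_poly_1 even_poly_1]
      by (intro even_poly_mult even_poly_diff) (auto simp: one_add_one)
    ultimately show ?thesis by (auto simp: cong_iff_dvd_diff)
  qed
qed

section \<open>Automorphisms of \<open>V\<close> given by matrices\<close>

text \<open>\<open>matrix_map m j p q r s\<close> sends (1, 0) \<mapsto> (p, r) and (0, 1) \<mapsto> (q, s). It is well defined on
  the summand K_j only if \<sigma>^j q = 0 in K, which is the recurring hypothesis
  \<open>monom 1 (2*m) dvd monom 1 (2*j) * q\<close>.\<close>

definition matrix_map :: "nat \<Rightarrow> nat \<Rightarrow> 'k::field poly \<Rightarrow> 'k poly \<Rightarrow> 'k poly \<Rightarrow> 'k poly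
    \<Rightarrow> 'k poly \<times> 'k poly \<Rightarrow> 'k poly \<times> 'k poly" where
  "matrix_map m j p q r s v =
     (trunc (2*m) (fst v * p + snd v * q), trunc (2*j) (fst v * r + snd v * s))"

lemma matrix_map_Vset:
  assumes "even_poly p" "even_poly q" "even_poly r" "even_poly s" "v \<in> Vset m j"
  shows "matrix_map m j p q r s v \<in> Vset m j"
  using assms
  by (simp add: Vset_iff matrix_map_def trunc_in_Lset even_poly_trunc even_poly_add even_poly_mult)

lemma matrix_map_left_inverse:
  fixes p q r s p' q' r' s' :: "'k::field poly"
  assumes "j \<le> m"
    and q': "monom 1 (2*m) dvd monom 1 (2*j) * q'"
    and c1: "[p*p' + r*q' = 1] (mod monom 1 (2*m))"
    and c2: "[q*p' + s*q' = 0] (mod monom 1 (2*m))"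
    and c3: "[p*r' + r*s' = 0] (mod monom 1 (2*j))"
    and c4: "[q*r' + s*s' = 1] (mod monom 1 (2*j))"
    and "v \<in> Vset m j"
  shows "matrix_map m j p' q' r' s' (matrix_map m j p q r s v) = v"
proof -
  obtain x y where xy: "v = (x, y)" by force
  have x: "x \<in> Lset (2*m)" and y: "y \<in> Lset (2*j)"
    using \<open>v \<in> Vset m j\<close> xy by (auto simp: Vset_iff)
  let ?M = "monom 1 (2*m) :: 'k poly" and ?J = "monom 1 (2*j) :: 'k poly"
  have "[trunc (2*m) (x*p + y*q) * p' + trunc (2*j) (x*r + y*s) * q'
      = (x*p + y*q) * p' + (x*r + y*s) * q'] (mod ?M)"
    by (intro cong_add cong_scalar_right cong_mult_absorb[OF q'] cong_trunc)
  also have "(x*p + y*q) * p' + (x*r + y*s) * q' = x * (p*p' + r*q') + y * (q*p' + s*q')"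
    by (simp add: algebra_simps)
  also have "[\<dots> = x * 1 + y * 0] (mod ?M)"
    by (intro cong_add cong_scalar_left c1 c2)
  finally have 1: "trunc (2*m) (trunc (2*m) (x*p + y*q) * p' + trunc (2*j) (x*r + y*s) * q') = x"
    using x by (simp add: trunc_eq_iff_cong[symmetric] trunc_eq_self)
  have "[trunc (2*m) (x*p + y*q) * r' = (x*p + y*q) * r'] (mod ?J)"
    using \<open>j \<le> m\<close> by (intro cong_monom_1_mono[of "2*j" "2*m"] cong_scalar_right cong_trunc) auto
  then have "[trunc (2*m) (x*p + y*q) * r' + trunc (2*j) (x*r + y*s) * s'
      = (x*p + y*q) * r' + (x*r + y*s) * s'] (mod ?J)"
    by (rule cong_add[OF _ cong_scalar_right[OF cong_trunc]])
  also have "(x*p + y*q) * r' + (x*r + y*s) * s' = x * (p*r' + r*s') + y * (q*r' + s*s')"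
    by (simp add: algebra_simps)
  also have "[\<dots> = x * 0 + y * 1] (mod ?J)"
    by (intro cong_add cong_scalar_left c3 c4)
  finally have 2: "trunc (2*j) (trunc (2*m) (x*p + y*q) * r' + trunc (2*j) (x*r + y*s) * s') = y"
    using y by (simp add: trunc_eq_iff_cong[symmetric] trunc_eq_self)
  show ?thesis
    using 1 2 xy by (simp add: matrix_map_def)
qed

lemma matrix_map_add:
  "matrix_map m j p q r s (fst u + fst v, snd u + snd v) =
     (fst (matrix_map m j p q r s u) + fst (matrix_map m j p q r s v),
      snd (matrix_map m j p q r s u) + snd (matrix_map m j p q r s v))"
  by (simp add: matrix_map_def algebra_simps flip: trunc_add)

lemma matrix_map_Vsmult:
  fixes p q r s :: "'k::field poly"
  assumes "j \<le> m" and q: "monom 1 (2*m) dvd monom 1 (2*j) * q"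
  shows "matrix_map m j p q r s (Vsmult m j t v) = Vsmult m j t (matrix_map m j p q r s v)"
proof -
  obtain x y where xy: "v = (x, y)" by force
  let ?M = "monom 1 (2*m) :: 'k poly" and ?J = "monom 1 (2*j) :: 'k poly"
  have "[trunc (2*m) (t*x) * p + trunc (2*j) (t*y) * q = t*x*p + t*y*q] (mod ?M)"
    by (intro cong_add cong_scalar_right cong_mult_absorb[OF q] cong_trunc)
  also have "t*x*p + t*y*q = t * (x*p + y*q)"
    by (simp add: algebra_simps)
  also have "[t * (x*p + y*q) = t * trunc (2*m) (x*p + y*q)] (mod ?M)"
    by (intro cong_scalar_left cong_sym[OF cong_trunc])
  finally have 1: "trunc (2*m) (trunc (2*m) (t*x) * p + trunc (2*j) (t*y) * q)
      = trunc (2*m) (t * trunc (2*m) (x*p + y*q))"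
    by (simp only: trunc_eq_iff_cong)
  have "[trunc (2*m) (t*x) * r = t*x*r] (mod ?J)"
    using \<open>j \<le> m\<close> by (intro cong_monom_1_mono[of "2*j" "2*m"] cong_scalar_right cong_trunc) auto
  then have "[trunc (2*m) (t*x) * r + trunc (2*j) (t*y) * s = t*x*r + t*y*s] (mod ?J)"
    by (rule cong_add[OF _ cong_scalar_right[OF cong_trunc]])
  also have "t*x*r + t*y*s = t * (x*r + y*s)"
    by (simp add: algebra_simps)
  also have "[t * (x*r + y*s) = t * trunc (2*j) (x*r + y*s)] (mod ?J)"
    by (intro cong_scalar_left cong_sym[OF cong_trunc])
  finally have 2: "trunc (2*j) (trunc (2*m) (t*x) * r + trunc (2*j) (t*y) * s)
      = trunc (2*j) (t * trunc (2*j) (x*r + y*s))"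
    by (simp only: trunc_eq_iff_cong)
  show ?thesis
    using 1 2 xy by (simp add: matrix_map_def Vsmult_def)
qed

lemma matrix_map_in_AutV:
  fixes p q r s e :: "'k::field poly"
  assumes "j \<le> m"
    and ev: "even_poly p" "even_poly q" "even_poly r" "even_poly s" "even_poly e"
    and q: "monom 1 (2*m) dvd monom 1 (2*j) * q"
    and det: "[(p*s - r*q) * e = 1] (mod monom 1 (2*m))"
  shows "matrix_map m j p q r s \<in> AutV m j"
proof -
  define p' where "p' = e * s"
  define q' where "q' = - (e * q)"
  define r' where "r' = - (e * r)"
  define s' where "s' = e * p"
  have ev': "even_poly p'" "even_poly q'" "even_poly r'" "even_poly s'"
    using ev by (simp_all add: p'_def q'_def r'_def s'_def even_poly_mult even_poly_minus)
  have q': "monom 1 (2*m) dvd monom 1 (2*j) * q'"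
    using q by (simp add: q'_def mult.left_commute[of _ e])
  have detJ: "[(p*s - r*q) * e = 1] (mod monom 1 (2*j))"
    using \<open>j \<le> m\<close> det by (intro cong_monom_1_mono[of "2*j" "2*m"]) auto
  have adj: "p*p' + r*q' = (p*s - r*q) * e" "q*p' + s*q' = 0"
    "p*r' + r*s' = 0" "q*r' + s*s' = (p*s - r*q) * e"
    "p'*p + r'*q = (p*s - r*q) * e" "q'*p + s'*q = 0"
    "p'*r + r'*s = 0" "q'*r + s'*s = (p*s - r*q) * e"
    by (simp_all add: p'_def q'_def r'_def s'_def algebra_simps)
  have "bij_betw (matrix_map m j p q r s) (Vset m j) (Vset m j)"
  proof (rule bij_betw_byWitness[where f' = "matrix_map m j p' q' r' s'"])
    show "\<forall>v\<in>Vset m j. matrix_map m j p' q' r' s' (matrix_map m j p q r s v) = v"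
      using matrix_map_left_inverse[OF \<open>j \<le> m\<close> q'] adj det detJ by simp
    show "\<forall>v\<in>Vset m j. matrix_map m j p q r s (matrix_map m j p' q' r' s' v) = v"
      using matrix_map_left_inverse[OF \<open>j \<le> m\<close> q] adj det detJ by simp
    show "matrix_map m j p q r s ` Vset m j \<subseteq> Vset m j"
      using matrix_map_Vset[OF ev(1-4)] by blast
    show "matrix_map m j p' q' r' s' ` Vset m j \<subseteq> Vset m j"
      using matrix_map_Vset[OF ev'] by blast
  qed
  then show ?thesis
    using matrix_map_Vsmult[OF \<open>j \<le> m\<close> q] by (simp add: AutV_def matrix_map_add)
qed

section \<open>Equivalence of the maps \<open>\<theta>\<close>\<close>

lemma tensor_id_matrix_map_cong:
  fixes p q r s :: "'k::field poly"
  assumes "j \<le> m" and q: "monom 1 (2*m) dvd monom 1 (2*j) * q"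
  shows "[fst (tensor_id m j (matrix_map m j p q r s) z) = fst z * p + snd z * q] (mod monom 1 (2*m))"
    and "[snd (tensor_id m j (matrix_map m j p q r s) z) = fst z * r + snd z * s] (mod monom 1 (2*j))"
proof -
  define o1 where "o1 = trunc (2*m) (1::'k poly)"
  define o2 where "o2 = trunc (2*j) (1::'k poly)"
  have T: "tensor_id m j (matrix_map m j p q r s) z =
      (trunc (2*m) (fst z * trunc (2*m) (o1 * p) + snd z * trunc (2*m) (o2 * q)),
       trunc (2*j) (fst z * trunc (2*j) (o1 * r) + snd z * trunc (2*j) (o2 * s)))"
    by (simp add: tensor_id_def matrix_map_def o1_def o2_def Let_def)
  have o1M: "[o1 = 1] (mod monom 1 (2*m))" and o2J: "[o2 = 1] (mod monom 1 (2*j))"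
    unfolding o1_def o2_def by (rule cong_trunc)+
  have o1J: "[o1 = 1] (mod monom 1 (2*j))"
    using \<open>j \<le> m\<close> o1M by (intro cong_monom_1_mono[of "2*j" "2*m"]) auto
  have "[trunc (2*m) (o1 * p) = 1 * p] (mod monom 1 (2*m))"
    by (rule cong_trans[OF cong_trunc cong_scalar_right[OF o1M]])
  moreover have "[trunc (2*m) (o2 * q) = 1 * q] (mod monom 1 (2*m))"
    by (rule cong_trans[OF cong_trunc cong_mult_absorb[OF q o2J]])
  ultimately have "[fst z * trunc (2*m) (o1 * p) + snd z * trunc (2*m) (o2 * q)
      = fst z * (1 * p) + snd z * (1 * q)] (mod monom 1 (2*m))"
    by (intro cong_add cong_scalar_left)
  then show "[fst (tensor_id m j (matrix_map m j p q r s) z) = fst z * p + snd z * q] (mod monom 1 (2*m))"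
    unfolding T fst_conv using cong_trans[OF cong_trunc] by simp
  have "[trunc (2*j) (o1 * r) = 1 * r] (mod monom 1 (2*j))"
    by (rule cong_trans[OF cong_trunc cong_scalar_right[OF o1J]])
  moreover have "[trunc (2*j) (o2 * s) = 1 * s] (mod monom 1 (2*j))"
    by (rule cong_trans[OF cong_trunc cong_scalar_right[OF o2J]])
  ultimately have "[fst z * trunc (2*j) (o1 * r) + snd z * trunc (2*j) (o2 * s)
      = fst z * (1 * r) + snd z * (1 * s)] (mod monom 1 (2*j))"
    by (intro cong_add cong_scalar_left)
  then show "[snd (tensor_id m j (matrix_map m j p q r s) z) = fst z * r + snd z * s] (mod monom 1 (2*j))"
    unfolding T snd_conv using cong_trans[OF cong_trunc] by simp
qed

lemma thetaL_tensor_id_matrix_map: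
  fixes a b p q r s :: "'k::field poly"
  assumes "j \<le> m"
    and q: "monom 1 (2*m) dvd monom 1 (2*j) * q" and b: "monom 1 (2*m) dvd monom 1 (2*j) * b"
  shows "thetaL m (a, b) (tensor_id m j (matrix_map m j p q r s) z)
       = trunc (2*m) (fst z * (a*p + b*r) + snd z * (a*q + b*s))"
proof -
  let ?T = "tensor_id m j (matrix_map m j p q r s) z"
  have "[a * fst ?T + snd ?T * b = a * (fst z * p + snd z * q) + (fst z * r + snd z * s) * b]
      (mod monom 1 (2*m))"
    using tensor_id_matrix_map_cong[OF \<open>j \<le> m\<close> q]
    by (intro cong_add cong_scalar_left cong_mult_absorb[OF b])
  also have "a * (fst z * p + snd z * q) + (fst z * r + snd z * s) * b
      = fst z * (a*p + b*r) + snd z * (a*q + b*s)"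
    by (simp add: algebra_simps)
  finally show ?thesis
    by (simp add: thetaL_def trunc_eq_iff_cong mult.commute[of b])
qed

lemma equivalent_of_matrix_map:
  fixes a b c d p q r s :: "'k::field poly"
  assumes "j \<le> m" "matrix_map m j p q r s \<in> AutV m j"
    and q: "monom 1 (2*m) dvd monom 1 (2*j) * q" and b: "monom 1 (2*m) dvd monom 1 (2*j) * b"
    and c: "[a*p + b*r = c] (mod monom 1 (2*m))" and d: "[a*q + b*s = d] (mod monom 1 (2*m))"
  shows "equivalent m j (a, b) (trunc (2*m) c, trunc (2*m) d)"
proof -
  have "thetaL m (trunc (2*m) c, trunc (2*m) d) z
      = thetaL m (a, b) (tensor_id m j (matrix_map m j p q r s) z)" for z
  proof -
    have "[fst z * (a*p + b*r) + snd z * (a*q + b*s) = fst z * c + snd z * d] (mod monom 1 (2*m))"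
      by (intro cong_add cong_scalar_left c d)
    also have "[fst z * c + snd z * d = fst z * trunc (2*m) c + snd z * trunc (2*m) d] (mod monom 1 (2*m))"
      by (intro cong_add cong_scalar_left cong_sym[OF cong_trunc])
    finally have "[fst z * trunc (2*m) c + snd z * trunc (2*m) d
        = fst z * (a*p + b*r) + snd z * (a*q + b*s)] (mod monom 1 (2*m))"
      by (rule cong_sym)
    moreover have "thetaL m (trunc (2*m) c, trunc (2*m) d) z
        = trunc (2*m) (fst z * trunc (2*m) c + snd z * trunc (2*m) d)"
      by (simp add: thetaL_def ac_simps)
    ultimately show ?thesis
      by (simp add: thetaL_tensor_id_matrix_map[OF \<open>j \<le> m\<close> q b] trunc_eq_iff_cong)
  qed
  with assms(2) show ?thesis
    unfolding equivalent_def by blast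
qed

text \<open>If (a | b) = (c | d) A with det A a unit, then (a | b) A^(-1) = (c | d), and A^(-1) is the
  adjugate of A divided by det A.\<close>

lemma equivalent_of_factorization:
  fixes a b c d p q r s :: "'k::field poly"
  assumes "j \<le> m"
    and ev: "even_poly p" "even_poly q" "even_poly r" "even_poly s"
    and det: "coeff (p*s - r*q) 0 \<noteq> 0"
    and q: "monom 1 (2*m) dvd monom 1 (2*j) * q" and b: "monom 1 (2*m) dvd monom 1 (2*j) * b"
    and ha: "[a = c*p + d*r] (mod monom 1 (2*m))" and hb: "[b = c*q + d*s] (mod monom 1 (2*m))"
  shows "equivalent m j (a, b) (trunc (2*m) c, trunc (2*m) d)"
proof -
  let ?M = "monom 1 (2*m) :: 'k poly"
  define D where "D = p*s - r*q"
  have evD: "even_poly D"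
    using ev by (simp add: D_def even_poly_mult even_poly_diff)
  obtain e where e: "even_poly e" "[D * e = 1] (mod ?M)"
    using even_poly_inverse_mod[OF evD det[folded D_def]] by blast
  define p' where "p' = e * s"
  define q' where "q' = - (e * q)"
  define r' where "r' = - (e * r)"
  define s' where "s' = e * p"
  have "(p'*s' - r'*q') * D = (D * e) * (D * e)"
    by (simp add: p'_def q'_def r'_def s'_def D_def algebra_simps)
  also have "[\<dots> = 1 * 1] (mod ?M)"
    by (rule cong_mult[OF e(2) e(2)])
  finally have "[(p'*s' - r'*q') * D = 1] (mod ?M)"
    by simp
  moreover have q': "?M dvd monom 1 (2*j) * q'"
    using q by (simp add: q'_def mult.left_commute[of _ e])
  ultimately have "matrix_map m j p' q' r' s' \<in> AutV m j"
    using ev e evD \<open>j \<le> m\<close>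
    by (intro matrix_map_in_AutV) (simp_all add: p'_def q'_def r'_def s'_def even_poly_mult even_poly_minus)
  moreover have "[a*p' + b*r' = c] (mod ?M)"
  proof -
    have "[a*p' + b*r' = (c*p + d*r)*p' + (c*q + d*s)*r'] (mod ?M)"
      by (intro cong_add cong_scalar_right ha hb)
    also have "(c*p + d*r)*p' + (c*q + d*s)*r' = c * (D * e)"
      by (simp add: p'_def r'_def D_def algebra_simps)
    also have "[\<dots> = c * 1] (mod ?M)"
      by (intro cong_scalar_left e)
    finally show ?thesis by simp
  qed
  moreover have "[a*q' + b*s' = d] (mod ?M)"
  proof -
    have "[a*q' + b*s' = (c*p + d*r)*q' + (c*q + d*s)*s'] (mod ?M)"
      by (intro cong_add cong_scalar_right ha hb)
    also have "(c*p + d*r)*q' + (c*q + d*s)*s' = d * (D * e)"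
      by (simp add: q'_def s'_def D_def algebra_simps)
    also have "[\<dots> = d * 1] (mod ?M)"
      by (intro cong_scalar_left e)
    finally show ?thesis by simp
  qed
  ultimately show ?thesis
    using equivalent_of_matrix_map[OF \<open>j \<le> m\<close> _ q' b] by blast
qed

lemma equivalent_imp_first_column:
  assumes "m \<ge> 1" "equivalent m j \<theta> \<theta>'"
  shows "\<exists>P R. (P, R) \<in> Vset m j \<and> trunc (2*m) (fst \<theta>') = thetaL m \<theta> (P, R)"
proof -
  obtain \<phi> where \<phi>: "\<phi> \<in> AutV m j"
    and eq: "\<forall>z\<in>Lset (2*m) \<times> Lset (2*j). thetaL m \<theta>' z = thetaL m \<theta> (tensor_id m j \<phi> z)"
    using assms(2) by (auto simp: equivalent_def)
  have one: "(1, 0) \<in> Vset m j"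
    using assms(1) by (simp add: Vset_iff Lset_def coeff_1)
  obtain P R where PR: "\<phi> (1, 0) = (P, R)" by force
  have "(P, R) \<in> Vset m j"
    using \<phi> one PR unfolding AutV_def by (metis (mono_tags, lifting) bij_betw_apply mem_Collect_eq)
  moreover have "tensor_id m j \<phi> (1, 0) = (P, R)"
    using PR \<open>(P, R) \<in> Vset m j\<close> assms(1) by (simp add: tensor_id_def Let_def trunc_one Vset_iff trunc_eq_self)
  moreover have "thetaL m \<theta>' (1, 0) = trunc (2*m) (fst \<theta>')"
    by (simp add: thetaL_def)
  ultimately show ?thesis
    using eq one by (metis Vset_iff fst_conv snd_conv mem_Times_iff)
qed

lemma eps_power: "eps ^ k = monom 1 k"
  by (simp add: eps_def monom_power)

lemma cong_one_plus_X_mult_imp_eq: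
  fixes \<gamma> \<gamma>' P R :: "'k::field poly"
  assumes "n \<le> m" "\<gamma> \<in> Kset (2*n)" "\<gamma>' \<in> Kset (2*n)" "even_poly P" "even_poly R"
    and "[1 + monom 1 1 * \<gamma>' = (1 + monom 1 1 * \<gamma>) * P + monom 1 (2*n+1) * R] (mod monom 1 (2*m))"
  shows "\<gamma> = \<gamma>'"
proof -
  let ?M = "monom 1 (2*m) :: 'k poly" and ?N = "monom 1 (2*n) :: 'k poly"
  have g: "\<gamma> \<in> Lset (2*n)" "even_poly \<gamma>" "\<gamma>' \<in> Lset (2*n)" "even_poly \<gamma>'"
    using assms(2,3) by (auto simp: Kset_iff)
  have "(1 + monom 1 1 * \<gamma>) * P + monom 1 (2*n+1) * R = P + monom 1 1 * (\<gamma> * P + ?N * R)"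
    by (simp add: algebra_simps mult_monom)
  with assms(6) have "[1 = P] (mod ?M)" "[\<gamma>' = \<gamma> * P + ?N * R] (mod ?M)"
    using cong_even_odd_iff[of 1 \<gamma>' P "\<gamma> * P + ?N * R" m] g assms(4,5)
    by (simp_all add: even_poly_add even_poly_mult even_poly_monom)
  then have P: "[P = 1] (mod ?N)" and \<gamma>': "[\<gamma>' = \<gamma> * P + ?N * R] (mod ?N)"
    using \<open>n \<le> m\<close> cong_monom_1_mono[of "2*n" "2*m"] by (auto simp: cong_sym_eq)
  note \<gamma>'
  also have "[\<gamma> * P + ?N * R = \<gamma> * 1 + 0] (mod ?N)"
    by (intro cong_add cong_scalar_left P) (simp add: cong_0_iff)
  finally have "[\<gamma> = \<gamma>'] (mod ?N)"
    by (simp add: cong_sym_eq)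
  then show ?thesis
    using Lset_cong_imp_eq g(1,3) by blast
qed

lemma vartheta_equivalent_imp_eq:
  fixes \<gamma> \<gamma>' :: "'k::field poly"
  assumes "j \<le> m" "\<gamma> \<in> Gam m j" "\<gamma>' \<in> Gam m j"
    and "equivalent m j (vartheta m j \<gamma>) (vartheta m j \<gamma>')"
  shows "\<gamma> = \<gamma>'"
proof (cases "m = 0")
  case True
  then show ?thesis
    using assms(2,3) Lset_cong_imp_eq[of \<gamma> 0 \<gamma>'] by (simp add: Gam_def Kset_iff cong_monom_1_iff)
next
  case False
  define n where "n = m - j"
  let ?M = "monom 1 (2*m) :: 'k poly"
  obtain P R where PR: "(P, R) \<in> Vset m j"
    and eq: "trunc (2*m) (fst (vartheta m j \<gamma>')) = thetaL m (vartheta m j \<gamma>) (P, R)"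
    using equivalent_imp_first_column[OF _ assms(4)] False by auto
  have "[1 + eps * \<gamma>' = trunc (2*m) (1 + eps * \<gamma>')] (mod ?M)"
    by (rule cong_sym[OF cong_trunc])
  also have "[trunc (2*m) (1 + eps * \<gamma>')
      = trunc (2*m) (1 + eps * \<gamma>) * P + trunc (2*m) (eps ^ (2*n+1)) * R] (mod ?M)"
    using eq by (simp add: thetaL_def vartheta_def n_def trunc_eq_iff_cong)
  also have "[trunc (2*m) (1 + eps * \<gamma>) * P + trunc (2*m) (eps ^ (2*n+1)) * R
      = (1 + eps * \<gamma>) * P + eps ^ (2*n+1) * R] (mod ?M)"
    by (intro cong_add cong_scalar_right cong_trunc)
  finally have "[1 + monom 1 1 * \<gamma>' = (1 + monom 1 1 * \<gamma>) * P + monom 1 (2*n+1) * R] (mod ?M)"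
    by (simp only: eps_power) (simp only: eps_def)
  with PR assms(2,3) show ?thesis
    by (intro cong_one_plus_X_mult_imp_eq[of n m]) (auto simp: n_def Gam_def Vset_iff)
qed

lemma id_in_AutV: "(\<lambda>v. v) \<in> AutV m j"
  by (simp add: AutV_def bij_betw_id[unfolded id_def])

lemma tensor_id_id:
  assumes "fst z \<in> Lset (2*m)" "snd z \<in> Lset (2*j)"
  shows "tensor_id m j (\<lambda>v. v) z = z"
proof -
  have "trunc n (x * trunc n 1) = x" if "x \<in> Lset n" for n and x :: "'a::field poly"
    using that cong_scalar_left[OF cong_trunc, of x n 1]
    by (metis trunc_eq_iff_cong trunc_eq_self mult_1_right)
  then show ?thesis
    using assms by (cases z) (simp add: tensor_id_def Let_def)
qed

lemma equivalent_refl: "equivalent m j \<theta> \<theta>"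
  unfolding equivalent_def by (rule bexI[OF _ id_in_AutV]) (auto simp: tensor_id_id)

lemma equivalent_0: "equivalent 0 j \<theta> \<theta>'"
  unfolding equivalent_def by (rule bexI[OF _ id_in_AutV]) (simp add: thetaL_def trunc_0)

section \<open>Existence of the normal form\<close>

lemma det2_eq_0_imp_nontrivial_kernel:
  fixes x y z w :: "'k::field"
  assumes "x * w - y * z = 0"
  shows "\<exists>c1 c2. (c1 \<noteq> 0 \<or> c2 \<noteq> 0) \<and> x * c1 + z * c2 = 0 \<and> y * c1 + w * c2 = 0"
proof (cases "z \<noteq> 0 \<or> x \<noteq> 0")
  case True
  then show ?thesis
    using assms by (intro exI[of _ z] exI[of _ "- x"]) (auto simp: algebra_simps)
next
  case xz: False
  show ?thesis
  proof (cases "w \<noteq> 0 \<or> y \<noteq> 0")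
    case True
    then show ?thesis
      using xz by (intro exI[of _ w] exI[of _ "- y"]) (auto simp: algebra_simps)
  next
    case False
    then show ?thesis
      using xz by (intro exI[of _ 1] exI[of _ 0]) auto
  qed
qed

text \<open>The socle vector (c1 \<sigma>^(m-1), c2 \<sigma>^(j-1)) is mapped to
  \<epsilon>^(2(m-1)) (c1 \<alpha>_0 + c2 \<mu>_0) + \<epsilon>^(2m-1) (c1 \<beta>_0 + c2 \<nu>_0), which vanishes when (c1, c2) is a
  kernel vector of the matrix of constant terms.\<close>

lemma thetaK_inj_imp_det_nonzero:
  fixes a b \<alpha> \<beta> \<mu> \<nu> :: "'k::field poly"
  assumes "j \<ge> 1" "j \<le> m"
    and inj: "inj_on (thetaK m (a, b)) (Vset m j)"
    and ha: "a = \<alpha> + monom 1 1 * \<beta>" and hb: "b = monom 1 (2*(m-j)) * (\<mu> + monom 1 1 * \<nu>)"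
    and ev: "even_poly \<alpha>" "even_poly \<mu>"
  shows "coeff \<alpha> 0 * coeff \<nu> 0 - coeff \<beta> 0 * coeff \<mu> 0 \<noteq> 0"
proof
  assume "coeff \<alpha> 0 * coeff \<nu> 0 - coeff \<beta> 0 * coeff \<mu> 0 = 0"
  from det2_eq_0_imp_nontrivial_kernel[OF this] obtain c1 c2 where c: "c1 \<noteq> 0 \<or> c2 \<noteq> 0"
    "coeff \<alpha> 0 * c1 + coeff \<mu> 0 * c2 = 0" "coeff \<beta> 0 * c1 + coeff \<nu> 0 * c2 = 0"
    by blast
  define v where "v = (monom c1 (2*(m-1)), monom c2 (2*(j-1)))"
  define b' where "b' = \<mu> + monom 1 1 * \<nu>"
  define w where "w = monom c1 (2*(m-1)) * a + monom c2 (2*(m-1)) * b'"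
  have "v \<in> Vset m j" "(0, 0) \<in> Vset m j" "v \<noteq> (0, 0)"
    using c \<open>j \<ge> 1\<close> \<open>j \<le> m\<close> by (auto simp: v_def Vset_iff Lset_def coeff_monom even_poly_monom)
  have "b * monom c2 (2*(j-1)) = monom c2 (2*(m-j) + 2*(j-1)) * b'"
    by (simp add: hb b'_def mult_monom algebra_simps)
  also have "2*(m-j) + 2*(j-1) = 2*(m-1)"
    using \<open>j \<ge> 1\<close> \<open>j \<le> m\<close> by simp
  finally have "thetaK m (a, b) v = trunc (2*m) w"
    by (simp add: thetaK_def v_def w_def ac_simps)
  moreover have "coeff w i = 0" if "2*(m-1) \<le> i" "i < 2*m" for i
  proof -
    have "i = 2*(m-1) \<or> i = 2*(m-1) + 1"
      using that by auto
    moreover have "coeff a 0 = coeff \<alpha> 0" "coeff a 1 = coeff \<beta> 0"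
      "coeff b' 0 = coeff \<mu> 0" "coeff b' 1 = coeff \<nu> 0"
      using ev by (auto simp: ha b'_def coeff_monom_mult even_poly_def)
    ultimately show ?thesis
      using c(2,3) by (auto simp: w_def coeff_monom_mult mult.commute[of _ c1] mult.commute[of _ c2])
  qed
  then have "trunc (2*m) w = 0"
    by (auto simp: poly_eq_iff coeff_trunc w_def coeff_monom_mult not_le)
  moreover have "thetaK m (a, b) (0, 0) = 0"
    by (simp add: thetaK_def poly_eq_iff coeff_trunc)
  ultimately show False
    using inj \<open>v \<in> Vset m j\<close> \<open>(0, 0) \<in> Vset m j\<close> \<open>v \<noteq> (0, 0)\<close> by (metis inj_on_def)
qed

lemma thetaL_surj_imp_coeff_0:
  assumes "m \<ge> 1" "thetaL m (a, b) ` (Lset (2*m) \<times> Lset (2*j)) = Lset (2*m)"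
  shows "coeff a 0 \<noteq> 0 \<or> coeff b 0 \<noteq> 0"
proof -
  have "1 \<in> Lset (2*m)"
    using assms(1) by (simp add: Lset_def coeff_1)
  then have "1 \<in> thetaL m (a, b) ` (Lset (2*m) \<times> Lset (2*j))"
    using assms(2) by simp
  then obtain z where "thetaL m (a, b) z = 1"
    by (auto elim!: imageE)
  moreover have "coeff (thetaL m (a, b) z) 0 = coeff a 0 * coeff (fst z) 0 + coeff b 0 * coeff (snd z) 0"
    using assms(1) by (simp add: thetaL_def coeff_trunc coeff_mult_0)
  ultimately show ?thesis
    by auto
qed

lemma exists_quotient_mod:
  fixes \<alpha> \<beta> :: "'k::field poly"
  assumes "even_poly \<alpha>" "even_poly \<beta>" "coeff \<alpha> 0 \<noteq> 0"
  shows "\<exists>\<gamma>\<in>Kset (2*n). monom 1 (2*n) dvd \<beta> - \<gamma> * \<alpha>"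
proof -
  obtain \<alpha>' where \<alpha>': "even_poly \<alpha>'" "[\<alpha> * \<alpha>' = 1] (mod monom 1 (2*n))"
    using even_poly_inverse_mod[OF assms(1,3)] by blast
  define \<gamma> where "\<gamma> = trunc (2*n) (\<beta> * \<alpha>')"
  have "[\<gamma> * \<alpha> = (\<beta> * \<alpha>') * \<alpha>] (mod monom 1 (2*n))"
    unfolding \<gamma>_def by (rule cong_scalar_right[OF cong_trunc])
  also have "(\<beta> * \<alpha>') * \<alpha> = \<beta> * (\<alpha> * \<alpha>')"
    by (simp add: ac_simps)
  also have "[\<beta> * (\<alpha> * \<alpha>') = \<beta> * 1] (mod monom 1 (2*n))"
    by (intro cong_scalar_left \<alpha>')
  finally have "monom 1 (2*n) dvd \<beta> - \<gamma> * \<alpha>"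
    by (simp add: cong_iff_dvd_diff dvd_diff_commute)
  moreover have "\<gamma> \<in> Kset (2*n)"
    using assms \<alpha>' by (simp add: \<gamma>_def Kset_iff trunc_in_Lset even_poly_trunc even_poly_mult)
  ultimately show ?thesis
    by blast
qed

lemma equivalent_vartheta_of_decomposition:
  fixes m j :: nat and \<alpha> \<beta> \<mu> \<nu> \<gamma> :: "'k::field poly"
  defines "N \<equiv> monom 1 (2*(m-j)) :: 'k poly"
  assumes "j \<le> m" "m \<ge> 1"
    and ev: "even_poly \<alpha>" "even_poly \<beta>" "even_poly \<mu>" "even_poly \<nu>" "even_poly \<gamma>"
    and \<gamma>: "N dvd \<beta> - \<gamma> * \<alpha>"
    and det: "if j = 0 then coeff \<alpha> 0 \<noteq> 0 else coeff \<alpha> 0 * coeff \<nu> 0 - coeff \<beta> 0 * coeff \<mu> 0 \<noteq> 0"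
  shows "equivalent m j (\<alpha> + monom 1 1 * \<beta>, N * (\<mu> + monom 1 1 * \<nu>)) (vartheta m j \<gamma>)"
proof -
  let ?M = "monom 1 (2*m) :: 'k poly" and ?J = "monom 1 (2*j) :: 'k poly"
  have "2*j + 2*(m-j) = 2*m"
    using \<open>j \<le> m\<close> by simp
  then have MJN: "?M = ?J * N"
    by (simp add: N_def mult_monom)
  define r where "r = poly_shift (2*(m-j)) (\<beta> - \<gamma> * \<alpha>)"
  have Nr: "N * r = \<beta> - \<gamma> * \<alpha>"
    using \<gamma> by (simp add: r_def N_def monom_1_mult_poly_shift)
  then have \<beta>: "\<beta> = \<gamma> * \<alpha> + N * r"
    by simp
  define q where "q = N * \<mu>"
  define s where "s = (if j = 0 then 1 else \<nu> - \<gamma> * \<mu>)"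
  define \<Theta> where "\<Theta> = 1 + monom 1 1 * \<gamma>"
  define t where "t = monom 1 1 * N"
  have ev': "even_poly r" "even_poly q" "even_poly s"
    using ev by (simp_all add: r_def q_def s_def N_def even_poly_poly_shift even_poly_diff even_poly_mult
        even_poly_monom)
  have "vartheta m j \<gamma> = (trunc (2*m) \<Theta>, trunc (2*m) t)"
    unfolding vartheta_def eps_power by (simp add: \<Theta>_def t_def N_def eps_def mult_monom)
  moreover have "\<alpha> + monom 1 1 * \<beta> = \<Theta> * \<alpha> + t * r"
    by (simp add: \<beta> \<Theta>_def t_def algebra_simps)
  moreover have "[N * (\<mu> + monom 1 1 * \<nu>) = \<Theta> * q + t * s] (mod ?M)"
  proof (cases "j = 0")
    case True
    then have "N * (\<mu> + monom 1 1 * \<nu>) - (\<Theta> * q + t * s) = ?M * (monom 1 1 * (\<nu> - \<gamma> * \<mu> - 1))"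
      by (simp add: N_def \<Theta>_def q_def t_def s_def algebra_simps)
    then show ?thesis
      by (simp add: cong_iff_dvd_diff)
  qed (simp add: \<Theta>_def q_def t_def s_def algebra_simps)
  moreover have "coeff (\<alpha> * s - r * q) 0 \<noteq> 0"
  proof (cases "j = 0")
    case True
    then have "coeff q 0 = 0"
      using \<open>m \<ge> 1\<close> by (simp add: q_def N_def coeff_monom_mult)
    then show ?thesis
      using True det by (simp add: s_def coeff_mult_0)
  next
    case False
    then have "\<alpha> * s - r * q = \<alpha> * \<nu> - \<beta> * \<mu>"
      by (simp add: \<beta> s_def q_def algebra_simps)
    then show ?thesis
      using False det by (simp add: coeff_mult_0)
  qed
  moreover have "?M dvd ?J * q" "?M dvd ?J * (N * (\<mu> + monom 1 1 * \<nu>))"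
    by (simp_all add: q_def MJN mult.assoc)
  ultimately show ?thesis
    using equivalent_of_factorization[OF \<open>j \<le> m\<close> ev(1) ev'(2) ev'(1) ev'(3)] by simp
qed

lemma exists_equivalent_vartheta:
  fixes a b :: "'k::field poly"
  assumes "j \<le> m" "m \<ge> 1"
    and b: "trunc (2*m) (eps ^ (2*j) * b) = 0"
    and inj: "inj_on (thetaK m (a, b)) (Vset m j)"
    and surj: "thetaL m (a, b) ` (Lset (2*m) \<times> Lset (2*j)) = Lset (2*m)"
  shows "\<exists>\<gamma>\<in>Gam m j. equivalent m j (a, b) (vartheta m j \<gamma>)"
proof -
  define N where "N = (monom 1 (2*(m-j)) :: 'k poly)"
  have "2*j + 2*(m-j) = 2*m"
    using \<open>j \<le> m\<close> by simp
  then have "monom 1 (2*j) * N = monom 1 (2*m)"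
    by (simp add: N_def mult_monom)
  moreover have "monom 1 (2*m) dvd monom 1 (2*j) * b"
    using b by (simp add: eps_power trunc_eq_0_iff)
  ultimately have "N dvd b"
    by (metis dvd_mult_cancel_left monom_eq_0_iff one_neq_zero)
  define b' where "b' = poly_shift (2*(m-j)) b"
  define \<alpha> where "\<alpha> = even_part a"
  define \<beta> where "\<beta> = odd_part a"
  define \<mu> where "\<mu> = even_part b'"
  define \<nu> where "\<nu> = odd_part b'"
  have ev: "even_poly \<alpha>" "even_poly \<beta>" "even_poly \<mu>" "even_poly \<nu>"
    by (simp_all add: \<alpha>_def \<beta>_def \<mu>_def \<nu>_def even_poly_even_part even_poly_odd_part)
  have a: "a = \<alpha> + monom 1 1 * \<beta>"
    unfolding \<alpha>_def \<beta>_def by (rule even_odd_decomp)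
  have "b = N * b'"
    using \<open>N dvd b\<close> by (simp add: b'_def N_def monom_1_mult_poly_shift)
  then have b: "b = N * (\<mu> + monom 1 1 * \<nu>)"
    unfolding \<mu>_def \<nu>_def by (metis even_odd_decomp)
  have unit: "coeff \<alpha> 0 \<noteq> 0" if "m - j \<ge> 1"
  proof -
    have "coeff b 0 = 0"
      using that by (simp add: b N_def coeff_monom_mult)
    then show ?thesis
      using thetaL_surj_imp_coeff_0[OF \<open>m \<ge> 1\<close> surj] by (simp add: \<alpha>_def coeff_even_part)
  qed
  obtain \<gamma> where \<gamma>: "\<gamma> \<in> Gam m j" "N dvd \<beta> - \<gamma> * \<alpha>"
  proof (cases "m - j = 0")
    case True
    then show ?thesis
      using that[of 0] by (simp add: N_def Gam_def Kset_iff Lset_def)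
  next
    case False
    then have "m - j \<ge> 1"
      by simp
    then show ?thesis
      using that exists_quotient_mod[OF ev(1,2) unit] by (auto simp: Gam_def N_def)
  qed
  have "if j = 0 then coeff \<alpha> 0 \<noteq> 0 else coeff \<alpha> 0 * coeff \<nu> 0 - coeff \<beta> 0 * coeff \<mu> 0 \<noteq> 0"
    using unit \<open>m \<ge> 1\<close> thetaK_inj_imp_det_nonzero[OF _ \<open>j \<le> m\<close> inj a b[unfolded N_def] ev(1,3)]
    by auto
  then have "equivalent m j (a, b) (vartheta m j \<gamma>)"
    unfolding a b N_def
    using equivalent_vartheta_of_decomposition[OF \<open>j \<le> m\<close> \<open>m \<ge> 1\<close> ev] \<gamma>
    by (simp add: N_def Gam_def Kset_iff)
  with \<gamma> show ?thesis
    by blast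
qed

theorem proposition3p6:
  fixes m j :: nat and a b :: "'k::field poly"
  assumes "j \<le> m"
    and "a \<in> Lset (2*m)" and "b \<in> Lset (2*m)"
    and "trunc (2*m) (eps ^ (2*j) * b) = 0"
    and "inj_on (thetaK m (a, b)) (Vset m j)"
    and "thetaL m (a, b) ` (Lset (2*m) \<times> Lset (2*j)) = Lset (2*m)"
  shows "(\<exists>\<gamma>\<in>Gam m j. equivalent m j (a, b) (vartheta m j \<gamma>))
    \<and> (\<forall>\<gamma>::'k poly\<in>Gam m j. \<forall>\<gamma>'\<in>Gam m j.
         equivalent m j (vartheta m j \<gamma>) (vartheta m j \<gamma>') \<longleftrightarrow> \<gamma> = \<gamma>')"
proof
  show "\<exists>\<gamma>\<in>Gam m j. equivalent m j (a, b) (vartheta m j \<gamma>)"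
  proof (cases "m = 0")
    case True
    have "0 \<in> Gam m j"
      by (simp add: Gam_def Kset_iff Lset_def)
    with True show ?thesis
      using equivalent_0 by blast
  next
    case False
    then show ?thesis
      using exists_equivalent_vartheta[OF assms(1) _ assms(4-6)] by simp
  qed
  show "\<forall>\<gamma>::'k poly\<in>Gam m j. \<forall>\<gamma>'\<in>Gam m j.
      equivalent m j (vartheta m j \<gamma>) (vartheta m j \<gamma>') \<longleftrightarrow> \<gamma> = \<gamma>'"
    using vartheta_equivalent_imp_eq[OF assms(1)] equivalent_refl by blast
qed

end
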